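(* Let $R$ be a $u$-ring, let $n$ be a positive integer and let $I$ be a proper ideal of $R$. Then the following conditions are equivalent: (a) $I$ is a strongly $n$-absorbing ideal of $R$; (b) $I$ is an $n$-absorbing ideal of $R$; (c) for every integer $t$ with $0\leq t\leq n$, all ideals $I_1,\dots,I_t$ of $R$ and all elements $x_1,\dots,x_{n-t}\in R$ such that $x_1\cdots x_{n-t}I_1\cdots I_t\not\subseteq I$, one has $$(I:_R x_1\cdots x_{n-t}I_1\cdots I_t)=\Big[\bigcup_{i=1}^{n-t}(I:_R x_1\cdots\widehat{x_i}\cdots x_{n-t}I_1\cdots I_t)\Big]\cup\Big[\bigcup_{j=1}^{t}(I:_R x_1\cdots x_{n-t}I_1\cdots\widehat{I_j}\cdots I_t)\Big];$$ (d) for every integer $t$ with $0\leq t\leq n$, all ideals $I_1,\dots,I_t$ of $R$ and all elements $x_1,\dots,x_{n-t}\in R$ such that $x_1\cdots x_{n-t}I_1\cdots I_t\not\subseteq I$, either $(I:_R x_1\cdots x_{n-t}I_1\cdots I_t)=(I:_R x_1\cdots\widehat{x_i}\cdots x_{n-t}I_1\cdots I_t)$ for some $1\leq i\leq n-t$, or $(I:_R x_1\cdots x_{n-t}I_1\cdots I_t)=(I:_R x_1\cdots x_{n-t}I_1\cdots\widehat{I_j}\cdots I_t)$ for some $1\leq j\leq t$.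
   Context: All rings are commutative with $1\neq 0$. A ring $R$ is a $u$-ring if whenever an ideal of $R$ is contained in a finite union of ideals of $R$, it is contained in one of those ideals. A proper ideal $I$ of $R$ is $n$-absorbing if whenever $a_1\cdots a_{n+1}\in I$ with $a_1,\dots,a_{n+1}\in R$, there are $n$ of the $a_i$'s whose product is in $I$; it is strongly $n$-absorbing if whenever $I_1\cdots I_{n+1}\subseteq I$ for ideals $I_1,\dots,I_{n+1}$ of $R$, there are $n$ of the $I_i$'s whose product is contained in $I$. For an ideal (or element) $K$, $(I:_R K)=\{r\in R: rK\subseteq I\}$; $x_1\cdots x_{n-t}I_1\cdots I_t$ denotes the ideal product (with the elements regarded as principal ideals); a hat $\widehat{\ }$ denotes omission of that factor; an empty product is $R$. *)

theory Defs
  imports Main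
begin

definition is_ideal :: "'a::comm_ring_1 set \<Rightarrow> bool" where
  "is_ideal J \<longleftrightarrow> 0 \<in> J \<and> (\<forall>a\<in>J. \<forall>b\<in>J. a + b \<in> J) \<and> (\<forall>r. \<forall>a\<in>J. r * a \<in> J)"

definition ideal_gen :: "'a::comm_ring_1 set \<Rightarrow> 'a set" where
  "ideal_gen S = \<Inter>{J. is_ideal J \<and> S \<subseteq> J}"

definition principal :: "'a::comm_ring_1 \<Rightarrow> 'a set" where
  "principal x = ideal_gen {x}"

definition ideal_mult :: "'a::comm_ring_1 set \<Rightarrow> 'a set \<Rightarrow> 'a set" where
  "ideal_mult A B = ideal_gen {a * b | a b. a \<in> A \<and> b \<in> B}"

definition iprod :: "'a::comm_ring_1 set list \<Rightarrow> 'a set" where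
  "iprod Js = foldr ideal_mult Js UNIV"

definition colon :: "'a::comm_ring_1 set \<Rightarrow> 'a set \<Rightarrow> 'a set" where
  "colon I K = {r. \<forall>k\<in>K. r * k \<in> I}"

definition u_ring :: "'a::comm_ring_1 itself \<Rightarrow> bool" where
  "u_ring _ \<longleftrightarrow> (\<forall>(J::'a set) F. is_ideal J \<and> finite F \<and> (\<forall>K\<in>F. is_ideal K) \<and> J \<subseteq> \<Union>F
      \<longrightarrow> (\<exists>K\<in>F. J \<subseteq> K))"

definition n_absorbing :: "nat \<Rightarrow> 'a::comm_ring_1 set \<Rightarrow> bool" where
  "n_absorbing n I \<longleftrightarrow> is_ideal I \<and> I \<noteq> UNIV \<and>
     (\<forall>a :: nat \<Rightarrow> 'a. (\<Prod>i\<in>{..<n+1}. a i) \<in> I \<longrightarrow>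
        (\<exists>j<n+1. (\<Prod>i\<in>{..<n+1} - {j}. a i) \<in> I))"

definition strongly_n_absorbing :: "nat \<Rightarrow> 'a::comm_ring_1 set \<Rightarrow> bool" where
  "strongly_n_absorbing n I \<longleftrightarrow> is_ideal I \<and> I \<noteq> UNIV \<and>
     (\<forall>Is :: nat \<Rightarrow> 'a set. (\<forall>i<n+1. is_ideal (Is i)) \<and> iprod (map Is [0..<n+1]) \<subseteq> I \<longrightarrow>
        (\<exists>j<n+1. iprod (map Is (filter (\<lambda>k. k \<noteq> j) [0..<n+1])) \<subseteq> I))"

(* x_1 ... x_m I_1 ... I_t  (0-indexed: x 0..x (m-1), Is 0..Is (t-1)) *)
definition xI_prod :: "nat \<Rightarrow> nat \<Rightarrow> (nat \<Rightarrow> 'a::comm_ring_1) \<Rightarrow> (nat \<Rightarrow> 'a set) \<Rightarrow> 'a set" where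
  "xI_prod m t x Is = iprod (map (\<lambda>k. principal (x k)) [0..<m] @ map Is [0..<t])"

definition xI_prod_omit_x :: "nat \<Rightarrow> nat \<Rightarrow> (nat \<Rightarrow> 'a::comm_ring_1) \<Rightarrow> (nat \<Rightarrow> 'a set) \<Rightarrow> nat \<Rightarrow> 'a set" where
  "xI_prod_omit_x m t x Is i =
     iprod (map (\<lambda>k. principal (x k)) (filter (\<lambda>k. k \<noteq> i) [0..<m]) @ map Is [0..<t])"

definition xI_prod_omit_I :: "nat \<Rightarrow> nat \<Rightarrow> (nat \<Rightarrow> 'a::comm_ring_1) \<Rightarrow> (nat \<Rightarrow> 'a set) \<Rightarrow> nat \<Rightarrow> 'a set" where
  "xI_prod_omit_I m t x Is j =
     iprod (map (\<lambda>k. principal (x k)) [0..<m] @ map Is (filter (\<lambda>k. k \<noteq> j) [0..<t]))"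

end

theory Submission
  imports Defs "HOL-Library.Multiset"
begin

text \<open>An ideal \<open>J\<close> contains a product of ideals iff it contains all products of one element
from each factor, so products of ideals and of elements can be handled uniformly as multisets of
factor sets, each an ideal or a singleton. The core fact is that an \<open>n\<close>-absorbing ideal \<open>I\<close> of a
\<open>u\<close>-ring absorbs every product of \<open>n + 1\<close> such factors. This is proved by induction on the number
of factors that are not singletons: if \<open>A\<close> is such a factor and the product of the others is not
in \<open>I\<close>, replacing \<open>A\<close> by each of its elements \<open>a\<close> and applying the induction hypothesis puts
\<open>a\<close> into one of finitely many colon ideals \<open>(I : product of the others with one removed)\<close>; the
\<open>u\<close>-ring property puts all of \<open>A\<close> into a single one. Applied to a singleton \<open>{r}\<close> together with
\<open>n\<close> factors this gives the colon identity (c); (d) follows from (c) by the \<open>u\<close>-ring property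
again, and (d) with \<open>t = 0\<close> is \<open>n\<close>-absorption.\<close>

lemma is_ideal_mult_left: "is_ideal J \<Longrightarrow> a \<in> J \<Longrightarrow> r * a \<in> J"
  unfolding is_ideal_def by blast

lemma ideal_eq_UNIV_if_one: "is_ideal J \<Longrightarrow> 1 \<in> J \<Longrightarrow> J = UNIV"
  using is_ideal_mult_left[of J 1] by fastforce

lemma ideal_gen_subset_iff: "is_ideal J \<Longrightarrow> ideal_gen S \<subseteq> J \<longleftrightarrow> S \<subseteq> J"
  unfolding ideal_gen_def by auto

lemma is_ideal_colon: "is_ideal I \<Longrightarrow> is_ideal (colon I K)"
  unfolding is_ideal_def colon_def by (auto simp: distrib_right mult.assoc)

lemma is_ideal_principal: "is_ideal (principal x)"
  unfolding principal_def ideal_gen_def is_ideal_def by auto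

lemma u_ringD:
  "u_ring TYPE('a::comm_ring_1) \<Longrightarrow> is_ideal (J::'a set) \<Longrightarrow> finite F \<Longrightarrow> \<forall>K\<in>F. is_ideal K
    \<Longrightarrow> J \<subseteq> \<Union>F \<Longrightarrow> \<exists>K\<in>F. J \<subseteq> K"
  unfolding u_ring_def by blast

lemma u_ring_Union_eq:
  assumes "u_ring TYPE('a::comm_ring_1)" "is_ideal (J::'a set)" "finite F" "\<forall>K\<in>F. is_ideal K"
    and "J = \<Union>F"
  shows "\<exists>K\<in>F. J = K"
proof -
  obtain K where "K \<in> F" "J \<subseteq> K"
    using u_ringD[OF assms(1-4)] assms(5) by blast
  then show ?thesis using assms(5) by blast
qed

definition set_mult :: "'a::comm_ring_1 set \<Rightarrow> 'a set \<Rightarrow> 'a set" where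
  "set_mult A B = {a * b | a b. a \<in> A \<and> b \<in> B}"

lemma set_mult_left_commute: "set_mult A (set_mult B C) = set_mult B (set_mult A C)"
  unfolding set_mult_def by (auto simp: mult.left_commute) (metis mult.left_commute)+

interpretation set_mult: comp_fun_commute set_mult
  by unfold_locales (auto simp: fun_eq_iff set_mult_left_commute)

definition set_prod :: "'a::comm_ring_1 set multiset \<Rightarrow> 'a set" where
  "set_prod M = fold_mset set_mult {1} M"

lemma set_prod_empty [simp]: "set_prod {#} = {1}"
  unfolding set_prod_def by simp

lemma set_prod_add_mset: "set_prod (add_mset A M) = set_mult A (set_prod M)"
  unfolding set_prod_def by simp

lemma subset_colon_commute: "A \<subseteq> colon J B \<longleftrightarrow> B \<subseteq> colon J A"
  unfolding colon_def by (auto simp: subset_iff) (metis mult.commute)+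

lemma set_prod_add_mset_subset_iff:
  "set_prod (add_mset A M) \<subseteq> J \<longleftrightarrow> A \<subseteq> colon J (set_prod M)"
  unfolding set_prod_add_mset set_mult_def colon_def by blast

lemma set_prod_union_subset:
  assumes "is_ideal J" "set_prod N \<subseteq> J"
  shows "set_prod (M + N) \<subseteq> J"
proof (induction M)
  case (add A M)
  then show ?case
    using is_ideal_mult_left[OF assms(1)] by (auto simp: set_prod_add_mset_subset_iff colon_def)
qed (use assms in simp)

lemma set_prod_singletons: "set_prod (image_mset (\<lambda>x. {x}) M) = {prod_mset M}"
  by (induction M) (auto simp: set_prod_add_mset set_mult_def)

lemma iprod_Cons: "iprod (A # L) = ideal_mult A (iprod L)"
  by (simp add: iprod_def)

lemma iprod_subset_iff: "is_ideal J \<Longrightarrow> iprod L \<subseteq> J \<longleftrightarrow> set_prod (mset L) \<subseteq> J"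
proof (induction L arbitrary: J)
  case Nil
  then show ?case using ideal_eq_UNIV_if_one[of J] by (auto simp: iprod_def)
next
  case (Cons A L)
  have "iprod (A # L) \<subseteq> J \<longleftrightarrow> iprod L \<subseteq> colon J A"
    unfolding iprod_Cons ideal_mult_def ideal_gen_subset_iff[OF Cons.prems] subset_colon_commute[symmetric]
    by (auto simp: colon_def)
  also have "\<dots> \<longleftrightarrow> set_prod (mset L) \<subseteq> colon J A"
    using Cons.IH is_ideal_colon[OF Cons.prems] by blast
  also have "\<dots> \<longleftrightarrow> set_prod (mset (A # L)) \<subseteq> J"
    by (simp add: set_prod_add_mset_subset_iff subset_colon_commute)
  finally show ?case .
qed

lemma mem_colon_iprod:
  assumes "is_ideal I"
  shows "r \<in> colon I (iprod L) \<longleftrightarrow> set_prod (add_mset {r} (mset L)) \<subseteq> I"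
proof -
  have "r \<in> colon I (iprod L) \<longleftrightarrow> iprod L \<subseteq> colon I {r}"
    using subset_colon_commute[of "{r}"] by simp
  also have "\<dots> \<longleftrightarrow> set_prod (mset L) \<subseteq> colon I {r}"
    using iprod_subset_iff[OF is_ideal_colon[OF assms]] .
  finally show ?thesis
    by (simp add: set_prod_add_mset_subset_iff subset_colon_commute)
qed

lemma set_prod_principals_subset_iff:
  assumes "is_ideal J"
  shows "set_prod (image_mset (\<lambda>k. principal (x k)) A + N) \<subseteq> J
    \<longleftrightarrow> set_prod (image_mset (\<lambda>k. {x k}) A + N) \<subseteq> J"
proof (induction A arbitrary: N)
  case (add a A)
  have principal: "set_prod (add_mset (principal (x a)) M) \<subseteq> J
      \<longleftrightarrow> set_prod (add_mset {x a} M) \<subseteq> J" for M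
    unfolding set_prod_add_mset_subset_iff(1) principal_def
    using ideal_gen_subset_iff[OF is_ideal_colon[OF assms]] by simp
  show ?case
    using add.IH[of "add_mset {x a} N"] principal[of "image_mset (\<lambda>k. principal (x k)) A + N"]
    by simp
qed simp

lemma set_prod_add_one: "set_prod (add_mset {1} M) = set_prod M"
  by (simp add: set_prod_add_mset set_mult_def)

lemma one_mem_colon_iff: "1 \<in> colon I K \<longleftrightarrow> K \<subseteq> I"
  by (auto simp: colon_def)

lemma image_mset_mset_set_remove:
  "finite S \<Longrightarrow> i \<in> S \<Longrightarrow> image_mset f (mset_set S) - {#f i#} = image_mset f (mset_set (S - {i}))"
  by (simp add: mset_set.remove)

lemma mset_upt_lessThan: "mset [0..<m] = mset_set {..<m}"
  by (simp add: atLeast0LessThan)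

lemma mset_filter_upt_neq: "mset (filter (\<lambda>k. k \<noteq> i) [0..<m]) = mset_set ({..<m} - {i})"
proof -
  have "{k \<in> {0..<m}. k \<noteq> i} = {..<m} - {i}" by auto
  then show ?thesis by simp
qed

lemma n_absorbing_prod_mset:
  assumes "n_absorbing n I" "size M = n + 1" "prod_mset M \<in> I"
  shows "\<exists>x\<in>#M. prod_mset (M - {#x#}) \<in> I"
proof -
  obtain L where L: "mset L = M" using ex_mset by blast
  have M: "M = image_mset (nth L) (mset_set {..<n+1})"
    using L assms(2) map_nth[of L] mset_map[of "nth L" "[0..<length L]"]
    by (metis mset_upt_lessThan size_mset)
  obtain j where j: "j < n + 1" "(\<Prod>i\<in>{..<n+1} - {j}. L ! i) \<in> I"
    using assms(1,3) unfolding n_absorbing_def M prod_unfold_prod_mset by blast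
  then have "prod_mset (M - {#L ! j#}) \<in> I"
    by (simp add: M image_mset_mset_set_remove prod_unfold_prod_mset)
  then show ?thesis using j(1) M by auto
qed

lemma n_absorbing_singleton_factors:
  assumes "n_absorbing n I" "size M = n + 1" "\<forall>A\<in>#M. \<exists>x. A = {x}" "set_prod M \<subseteq> I"
  shows "\<exists>A\<in>#M. set_prod (M - {#A#}) \<subseteq> I"
proof -
  define M' where "M' = image_mset the_elem M"
  have M: "M = image_mset (\<lambda>x. {x}) M'"
    using assms(3) unfolding M'_def by (induction M) auto
  then obtain x where "x \<in># M'" "prod_mset (M' - {#x#}) \<in> I"
    using n_absorbing_prod_mset[OF assms(1)] assms(2,4) by (auto simp: set_prod_singletons)
  moreover have "M - {#{x}#} = image_mset (\<lambda>x. {x}) (M' - {#x#})"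
    using \<open>x \<in># M'\<close> by (simp add: M image_mset_Diff)
  moreover have "{x} \<in># M"
    using \<open>x \<in># M'\<close> by (simp add: M)
  ultimately show ?thesis
    by (metis empty_subsetI insert_subset set_prod_singletons)
qed

lemma u_ring_ideal_factor_absorbed:
  fixes I :: "'a::comm_ring_1 set"
  assumes U: "u_ring TYPE('a)" and "is_ideal I" "is_ideal A"
    and "\<forall>a\<in>A. \<exists>B\<in>#M. set_prod (add_mset {a} (M - {#B#})) \<subseteq> I"
  shows "\<exists>B\<in>#M. set_prod (add_mset A (M - {#B#})) \<subseteq> I"
proof -
  have "A \<subseteq> (\<Union>B\<in>set_mset M. colon I (set_prod (M - {#B#})))"
    using assms(4) by (auto simp: set_prod_add_mset_subset_iff)
  then obtain B where "B \<in># M" "A \<subseteq> colon I (set_prod (M - {#B#}))"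
    using u_ringD[OF U assms(3), of "(\<lambda>B. colon I (set_prod (M - {#B#}))) ` set_mset M"]
    by (auto simp: is_ideal_colon assms(2))
  then show ?thesis by (auto simp: set_prod_add_mset_subset_iff)
qed

lemma n_absorbing_set_prod:
  fixes I :: "'a::comm_ring_1 set"
  assumes U: "u_ring TYPE('a)" and B: "n_absorbing n I"
  shows "size M = n + 1 \<Longrightarrow> \<forall>A\<in>#M. is_ideal A \<or> (\<exists>x. A = {x}) \<Longrightarrow> set_prod M \<subseteq> I
    \<Longrightarrow> \<exists>A\<in>#M. set_prod (M - {#A#}) \<subseteq> I"
proof (induction "size (filter_mset (\<lambda>A. \<nexists>x. A = {x}) M)" arbitrary: M rule: less_induct)
  case less
  show ?case
  proof (cases "\<forall>A\<in>#M. \<exists>x. A = {x}")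
    case True
    then show ?thesis using n_absorbing_singleton_factors[OF B] less.prems by blast
  next
    case False
    then obtain A where A: "A \<in># M" "\<nexists>x. A = {x}" by blast
    define M' where "M' = M - {#A#}"
    have M: "M = add_mset A M'" using A(1) M'_def by simp
    show ?thesis
    proof (cases "set_prod M' \<subseteq> I")
      case True
      then show ?thesis using A(1) M'_def by blast
    next
      case M'_not_in_I: False
      have "\<forall>a\<in>A. \<exists>B\<in>#M'. set_prod (add_mset {a} (M' - {#B#})) \<subseteq> I"
      proof
        fix a assume "a \<in> A"
        define Ma where "Ma = add_mset {a} M'"
        have "size (filter_mset (\<lambda>A. \<nexists>x. A = {x}) Ma) < size (filter_mset (\<lambda>A. \<nexists>x. A = {x}) M)"
          using A(2) by (simp add: M Ma_def)
        moreover have "set_prod Ma \<subseteq> I"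
          using less.prems(3) \<open>a \<in> A\<close> by (auto simp: M Ma_def set_prod_add_mset_subset_iff)
        moreover have "size Ma = n + 1" "\<forall>A\<in>#Ma. is_ideal A \<or> (\<exists>x. A = {x})"
          using less.prems(1,2) by (auto simp: M Ma_def)
        ultimately obtain B where B: "B \<in># Ma" "set_prod (Ma - {#B#}) \<subseteq> I"
          using less.hyps by blast
        then have "B \<noteq> {a}" using M'_not_in_I by (auto simp: Ma_def)
        then show "\<exists>B\<in>#M'. set_prod (add_mset {a} (M' - {#B#})) \<subseteq> I"
          using B by (auto simp: Ma_def)
      qed
      moreover have "is_ideal A" using A less.prems(2) by blast
      moreover have "is_ideal I" using B unfolding n_absorbing_def by blast
      ultimately obtain B where "B \<in># M'" "set_prod (add_mset A (M' - {#B#})) \<subseteq> I"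
        using u_ring_ideal_factor_absorbed[OF U] by blast
      then show ?thesis using M by auto
    qed
  qed
qed

lemma n_absorbing_set_prod_insert_subset_iff:
  fixes I :: "'a::comm_ring_1 set"
  assumes U: "u_ring TYPE('a)" and B: "n_absorbing n I"
    and N: "size N = n" "\<forall>A\<in>#N. is_ideal A \<or> (\<exists>x. A = {x})" "\<not> set_prod N \<subseteq> I"
  shows "set_prod (add_mset {r} N) \<subseteq> I \<longleftrightarrow> (\<exists>A\<in>#N. set_prod (add_mset {r} (N - {#A#})) \<subseteq> I)"
proof
  assume "set_prod (add_mset {r} N) \<subseteq> I"
  moreover have "size (add_mset {r} N) = n + 1" "\<forall>A\<in>#add_mset {r} N. is_ideal A \<or> (\<exists>x. A = {x})"
    using N(1,2) by auto
  ultimately obtain A where A: "A \<in># add_mset {r} N" "set_prod (add_mset {r} N - {#A#}) \<subseteq> I"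
    using n_absorbing_set_prod[OF U B] by blast
  then have "A \<noteq> {r}" using N(3) by auto
  then show "\<exists>A\<in>#N. set_prod (add_mset {r} (N - {#A#})) \<subseteq> I" using A by auto
next
  assume "\<exists>A\<in>#N. set_prod (add_mset {r} (N - {#A#})) \<subseteq> I"
  then obtain A where "A \<in># N" "set_prod (add_mset {r} (N - {#A#})) \<subseteq> I" by blast
  moreover have "is_ideal I" using B unfolding n_absorbing_def by blast
  ultimately show "set_prod (add_mset {r} N) \<subseteq> I"
    using set_prod_union_subset[of I _ "{#A#}"] by fastforce
qed

definition xI_factors :: "(nat \<Rightarrow> 'a::comm_ring_1) \<Rightarrow> (nat \<Rightarrow> 'a set) \<Rightarrow> nat set \<Rightarrow> nat set \<Rightarrow> 'a set multiset" where
  "xI_factors x Is S T = image_mset (\<lambda>k. {x k}) (mset_set S) + image_mset Is (mset_set T)"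

lemma mem_colon_iprod_principals:
  assumes "is_ideal I" "mset xs = mset_set S" "mset ys = mset_set T"
  shows "r \<in> colon I (iprod (map (\<lambda>k. principal (x k)) xs @ map Is ys))
    \<longleftrightarrow> set_prod (add_mset {r} (xI_factors x Is S T)) \<subseteq> I"
  using mem_colon_iprod[OF assms(1)]
    set_prod_principals_subset_iff[OF assms(1), of x "mset_set S" "add_mset {r} (image_mset Is (mset_set T))"]
  by (simp add: assms(2,3) xI_factors_def)

lemma mem_colon_xI_prod:
  "is_ideal I \<Longrightarrow> r \<in> colon I (xI_prod m t x Is)
    \<longleftrightarrow> set_prod (add_mset {r} (xI_factors x Is {..<m} {..<t})) \<subseteq> I"
  unfolding xI_prod_def by (rule mem_colon_iprod_principals) (simp_all only: mset_upt_lessThan)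

lemma mem_colon_xI_prod_omit_x:
  "is_ideal I \<Longrightarrow> r \<in> colon I (xI_prod_omit_x m t x Is i)
    \<longleftrightarrow> set_prod (add_mset {r} (xI_factors x Is ({..<m} - {i}) {..<t})) \<subseteq> I"
  unfolding xI_prod_omit_x_def
  by (rule mem_colon_iprod_principals) (simp_all only: mset_upt_lessThan mset_filter_upt_neq)

lemma mem_colon_xI_prod_omit_I:
  "is_ideal I \<Longrightarrow> r \<in> colon I (xI_prod_omit_I m t x Is j)
    \<longleftrightarrow> set_prod (add_mset {r} (xI_factors x Is {..<m} ({..<t} - {j}))) \<subseteq> I"
  unfolding xI_prod_omit_I_def
  by (rule mem_colon_iprod_principals) (simp_all only: mset_upt_lessThan mset_filter_upt_neq)

lemma xI_factors_remove:
  "finite S \<Longrightarrow> i \<in> S \<Longrightarrow> xI_factors x Is S T - {#{x i}#} = xI_factors x Is (S - {i}) T"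
  "finite T \<Longrightarrow> j \<in> T \<Longrightarrow> xI_factors x Is S T - {#Is j#} = xI_factors x Is S (T - {j})"
  unfolding xI_factors_def
  by (simp_all add: image_mset_mset_set_remove[symmetric] diff_union_swap2)

lemma set_prod_xI_factors_no_ideals:
  "set_prod (add_mset {r} (xI_factors x Is S {})) = {r * (\<Prod>k\<in>S. x k)}"
proof -
  have "image_mset (\<lambda>k. {x k}) (mset_set S) = image_mset (\<lambda>y. {y}) (image_mset x (mset_set S))"
    by (simp add: image_mset.compositionality comp_def)
  then show ?thesis
    by (simp add: xI_factors_def set_prod_add_mset set_mult_def set_prod_singletons
        prod_unfold_prod_mset)
qed

lemma iprod_principals_subset_iff:
  fixes a :: "nat \<Rightarrow> 'a::comm_ring_1"
  assumes "is_ideal J" "mset xs = mset_set S"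
  shows "iprod (map (\<lambda>k. principal (a k)) xs) \<subseteq> J \<longleftrightarrow> (\<Prod>k\<in>S. a k) \<in> J"
  using mem_colon_iprod_principals[OF assms, of "[]" "{}" 1 a]
  by (simp add: one_mem_colon_iff set_prod_xI_factors_no_ideals)

lemma strongly_n_absorbing_imp_n_absorbing:
  assumes "strongly_n_absorbing n I"
  shows "n_absorbing n I"
  unfolding n_absorbing_def
proof (intro conjI allI impI)
  show I: "is_ideal I" "I \<noteq> UNIV" using assms unfolding strongly_n_absorbing_def by blast+
  fix a :: "nat \<Rightarrow> 'a" assume "(\<Prod>i\<in>{..<n+1}. a i) \<in> I"
  then have "iprod (map (\<lambda>k. principal (a k)) [0..<n+1]) \<subseteq> I"
    using iprod_principals_subset_iff[OF I(1) mset_upt_lessThan] by blast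
  then obtain j where "j < n + 1" "iprod (map (\<lambda>k. principal (a k)) (filter (\<lambda>k. k \<noteq> j) [0..<n+1])) \<subseteq> I"
    using assms is_ideal_principal unfolding strongly_n_absorbing_def
    by (auto dest!: spec[of _ "\<lambda>k. principal (a k)"] simp del: upt_Suc)
  then show "\<exists>j<n+1. (\<Prod>i\<in>{..<n+1} - {j}. a i) \<in> I"
    using iprod_principals_subset_iff[OF I(1) mset_filter_upt_neq] by blast
qed

lemma n_absorbing_imp_strongly_n_absorbing:
  fixes I :: "'a::comm_ring_1 set"
  assumes U: "u_ring TYPE('a)" and B: "n_absorbing n I"
  shows "strongly_n_absorbing n I"
  unfolding strongly_n_absorbing_def
proof (intro conjI allI impI)
  show I: "is_ideal I" "I \<noteq> UNIV" using B unfolding n_absorbing_def by blast+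
  fix Is :: "nat \<Rightarrow> 'a set"
  assume Is: "(\<forall>i<n + 1. is_ideal (Is i)) \<and> iprod (map Is [0..<n + 1]) \<subseteq> I"
  define M where "M = image_mset Is (mset_set {..<n+1})"
  have "size M = n + 1" "\<forall>A\<in>#M. is_ideal A \<or> (\<exists>x. A = {x})" "set_prod M \<subseteq> I"
    using Is iprod_subset_iff[OF I(1), of "map Is [0..<n+1]"]
    by (simp_all only: M_def mset_map mset_upt_lessThan) auto
  then obtain A where "A \<in># M" "set_prod (M - {#A#}) \<subseteq> I"
    using n_absorbing_set_prod[OF U B] by blast
  moreover obtain j where j: "j < n + 1" "A = Is j"
    using \<open>A \<in># M\<close> by (auto simp: M_def)
  moreover have "mset (map Is (filter (\<lambda>k. k \<noteq> j) [0..<n+1])) = M - {#Is j#}"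
    unfolding mset_map mset_filter_upt_neq M_def
    using j(1) by (intro image_mset_mset_set_remove[symmetric]) auto
  ultimately show "\<exists>j<n + 1. iprod (map Is (filter (\<lambda>k. k \<noteq> j) [0..<n + 1])) \<subseteq> I"
    using iprod_subset_iff[OF I(1)] by (metis (no_types, lifting))
qed

lemma n_absorbing_colon_xI_prod_eq_Union:
  fixes I :: "'a::comm_ring_1 set"
  assumes U: "u_ring TYPE('a)" and B: "n_absorbing n I"
    and t: "t \<le> n" and Is: "\<forall>j<t. is_ideal (Is j)" and not_in_I: "\<not> xI_prod (n - t) t x Is \<subseteq> I"
  shows "colon I (xI_prod (n - t) t x Is) =
    (\<Union>i<n - t. colon I (xI_prod_omit_x (n - t) t x Is i))
    \<union> (\<Union>j<t. colon I (xI_prod_omit_I (n - t) t x Is j))"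
proof -
  have I: "is_ideal I" using B unfolding n_absorbing_def by blast
  define m where "m = n - t"
  define F where "F = xI_factors x Is {..<m} {..<t}"
  have F: "size F = n" "\<forall>A\<in>#F. is_ideal A \<or> (\<exists>y. A = {y})" "\<not> set_prod F \<subseteq> I"
    using t Is not_in_I mem_colon_xI_prod[OF I, of 1]
    by (auto simp: F_def m_def xI_factors_def one_mem_colon_iff set_prod_add_one)
  have "r \<in> colon I (xI_prod m t x Is)
    \<longleftrightarrow> r \<in> (\<Union>i<m. colon I (xI_prod_omit_x m t x Is i)) \<union> (\<Union>j<t. colon I (xI_prod_omit_I m t x Is j))"
    for r
  proof -
    have "r \<in> colon I (xI_prod m t x Is) \<longleftrightarrow> (\<exists>A\<in>#F. set_prod (add_mset {r} (F - {#A#})) \<subseteq> I)"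
      using n_absorbing_set_prod_insert_subset_iff[OF U B F] mem_colon_xI_prod[OF I] by (simp add: F_def)
    also have "\<dots> \<longleftrightarrow> (\<exists>i<m. set_prod (add_mset {r} (F - {#{x i}#})) \<subseteq> I)
        \<or> (\<exists>j<t. set_prod (add_mset {r} (F - {#Is j#})) \<subseteq> I)"
      by (auto simp: F_def xI_factors_def)
    also have "\<dots> \<longleftrightarrow> r \<in> (\<Union>i<m. colon I (xI_prod_omit_x m t x Is i)) \<union> (\<Union>j<t. colon I (xI_prod_omit_I m t x Is j))"
      by (auto simp: F_def xI_factors_remove mem_colon_xI_prod_omit_x[OF I] mem_colon_xI_prod_omit_I[OF I])
    finally show ?thesis .
  qed
  then show ?thesis unfolding m_def by blast
qed

lemma u_ring_colon_xI_prod_eq_omit: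
  fixes I :: "'a::comm_ring_1 set"
  assumes U: "u_ring TYPE('a)" and I: "is_ideal I"
    and colon_eq: "colon I (xI_prod m t x Is) =
      (\<Union>i<m. colon I (xI_prod_omit_x m t x Is i)) \<union> (\<Union>j<t. colon I (xI_prod_omit_I m t x Is j))"
  shows "(\<exists>i<m. colon I (xI_prod m t x Is) = colon I (xI_prod_omit_x m t x Is i))
    \<or> (\<exists>j<t. colon I (xI_prod m t x Is) = colon I (xI_prod_omit_I m t x Is j))"
proof -
  define F where "F = (\<lambda>i. colon I (xI_prod_omit_x m t x Is i)) ` {..<m}
    \<union> (\<lambda>j. colon I (xI_prod_omit_I m t x Is j)) ` {..<t}"
  have "colon I (xI_prod m t x Is) = \<Union>F" "finite F" "\<forall>K\<in>F. is_ideal K"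
    using colon_eq by (auto simp: F_def is_ideal_colon[OF I])
  then obtain K where "K \<in> F" "colon I (xI_prod m t x Is) = K"
    using u_ring_Union_eq[OF U is_ideal_colon[OF I]] by blast
  then show ?thesis unfolding F_def by blast
qed

lemma n_absorbing_if_colon_xI_prod_eq:
  assumes I: "is_ideal I" "I \<noteq> UNIV"
    and colon_eq: "\<And>a. \<not> xI_prod n 0 a Is \<subseteq> I
      \<Longrightarrow> \<exists>i<n. colon I (xI_prod n 0 a Is) = colon I (xI_prod_omit_x n 0 a Is i)"
  shows "n_absorbing n I"
  unfolding n_absorbing_def
proof (intro conjI I allI impI)
  fix a :: "nat \<Rightarrow> 'a" assume prod_in_I: "(\<Prod>i\<in>{..<n+1}. a i) \<in> I"
  have colon_prod: "r \<in> colon I (xI_prod n 0 a Is) \<longleftrightarrow> r * (\<Prod>k\<in>{..<n}. a k) \<in> I" for r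
    using mem_colon_xI_prod[OF I(1)] by (simp add: set_prod_xI_factors_no_ideals)
  show "\<exists>j<n+1. (\<Prod>i\<in>{..<n+1} - {j}. a i) \<in> I"
  proof (cases "xI_prod n 0 a Is \<subseteq> I")
    case True
    then have "(\<Prod>i\<in>{..<n+1} - {n}. a i) \<in> I"
      using colon_prod[of 1] by (simp add: one_mem_colon_iff lessThan_Suc)
    then show ?thesis by (intro exI[of _ n]) simp
  next
    case False
    then obtain i where i: "i < n" "colon I (xI_prod n 0 a Is) = colon I (xI_prod_omit_x n 0 a Is i)"
      using colon_eq by blast
    have "a n \<in> colon I (xI_prod n 0 a Is)"
      using prod_in_I by (simp add: colon_prod lessThan_Suc mult.commute)
    then have "a n * (\<Prod>k\<in>{..<n} - {i}. a k) \<in> I"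
      using i(2) mem_colon_xI_prod_omit_x[OF I(1)] by (simp add: set_prod_xI_factors_no_ideals)
    moreover have "{..<n+1} - {i} = insert n ({..<n} - {i})" using i(1) by auto
    ultimately show ?thesis using i(1) by (intro exI[of _ i]) simp
  qed
qed

theorem mainTheorem1:
  fixes I :: "'a::comm_ring_1 set" and n :: nat
  assumes "u_ring TYPE('a)" and "n > 0" and "is_ideal I" and "I \<noteq> UNIV"
  shows "(strongly_n_absorbing n I \<longleftrightarrow> n_absorbing n I)
    \<and> (n_absorbing n I \<longleftrightarrow>
        (\<forall>t\<le>n. \<forall>(Is :: nat \<Rightarrow> 'a set) (x :: nat \<Rightarrow> 'a).
           (\<forall>j<t. is_ideal (Is j)) \<and> \<not> xI_prod (n - t) t x Is \<subseteq> I \<longrightarrow>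
           colon I (xI_prod (n - t) t x Is) =
             (\<Union>i<n - t. colon I (xI_prod_omit_x (n - t) t x Is i))
             \<union> (\<Union>j<t. colon I (xI_prod_omit_I (n - t) t x Is j))))
    \<and> (n_absorbing n I \<longleftrightarrow>
        (\<forall>t\<le>n. \<forall>(Is :: nat \<Rightarrow> 'a set) (x :: nat \<Rightarrow> 'a).
           (\<forall>j<t. is_ideal (Is j)) \<and> \<not> xI_prod (n - t) t x Is \<subseteq> I \<longrightarrow>
           (\<exists>i<n - t. colon I (xI_prod (n - t) t x Is) = colon I (xI_prod_omit_x (n - t) t x Is i))
           \<or> (\<exists>j<t. colon I (xI_prod (n - t) t x Is) = colon I (xI_prod_omit_I (n - t) t x Is j))))"
  (is "(?a \<longleftrightarrow> ?b) \<and> (?b \<longleftrightarrow> ?c) \<and> (?b \<longleftrightarrow> ?d)")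
proof -
  note U = assms(1) and I = assms(3,4)
  have "?a \<longleftrightarrow> ?b"
    using strongly_n_absorbing_imp_n_absorbing n_absorbing_imp_strongly_n_absorbing[OF U] by blast
  moreover have "?b \<Longrightarrow> ?c"
  proof (intro allI impI)
    fix t Is x
    assume "?b" "t \<le> n" "(\<forall>j<t. is_ideal (Is j)) \<and> \<not> xI_prod (n - t) t x Is \<subseteq> I"
    then show "colon I (xI_prod (n - t) t x Is) =
      (\<Union>i<n - t. colon I (xI_prod_omit_x (n - t) t x Is i))
      \<union> (\<Union>j<t. colon I (xI_prod_omit_I (n - t) t x Is j))"
      by (intro n_absorbing_colon_xI_prod_eq_Union[OF U]) simp_all
  qed
  moreover have "?c \<Longrightarrow> ?d"
  proof (intro allI impI)
    fix t Is x
    assume "?c" "t \<le> n" "(\<forall>j<t. is_ideal (Is j)) \<and> \<not> xI_prod (n - t) t x Is \<subseteq> I"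
    then show "(\<exists>i<n - t. colon I (xI_prod (n - t) t x Is) = colon I (xI_prod_omit_x (n - t) t x Is i))
      \<or> (\<exists>j<t. colon I (xI_prod (n - t) t x Is) = colon I (xI_prod_omit_I (n - t) t x Is j))"
      by (intro u_ring_colon_xI_prod_eq_omit[OF U I(1)]) simp
  qed
  moreover have "?d \<Longrightarrow> ?b"
  proof (rule n_absorbing_if_colon_xI_prod_eq[OF I])
    fix a assume d: "?d" and "\<not> xI_prod n 0 a (\<lambda>_. UNIV) \<subseteq> I"
    then show "\<exists>i<n. colon I (xI_prod n 0 a (\<lambda>_. UNIV)) = colon I (xI_prod_omit_x n 0 a (\<lambda>_. UNIV) i)"
      using d[rule_format, of 0 "\<lambda>_. UNIV" a] by simp
  qed
  ultimately show ?thesis by blast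
qed

end
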